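(* For every integer $r\ge 2$, every real $c\ge \frac1{r-1}$ and every real $\epsilon>1/c$, there is a hereditary property $\mathcal H$ of $r$-uniform hypergraphs and an infinite set $S\subseteq\mathbb N$ such that $|\mathcal H_n|=n^{(r-1)(c+o(1))n}$ as $n\to\infty$ with $n\in S$, and such that $|\mathcal H_n|\ge 2^{n^{r-\epsilon}}$ for infinitely many $n$.
   Context: A hereditary property of $r$-uniform hypergraphs is a class of finite $r$-uniform hypergraphs closed under isomorphism and under taking induced subhypergraphs. $\mathcal H_n$ denotes the set of members of $\mathcal H$ with vertex set $[n]=\{1,\dots,n\}$. *)

theory Defs
  imports Complex_Main
begin

definition uniform_hg :: "nat \<Rightarrow> nat set \<Rightarrow> nat set set \<Rightarrow> bool" where
  "uniform_hg r V E \<longleftrightarrow> finite V \<and> (\<forall>e\<in>E. e \<subseteq> V \<and> card e = r)"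

definition hereditary_property :: "nat \<Rightarrow> (nat set \<times> nat set set) set \<Rightarrow> bool" where
  "hereditary_property r H \<longleftrightarrow>
     (\<forall>(V, E)\<in>H. uniform_hg r V E) \<and>
     (\<forall>V E V' f. (V, E) \<in> H \<longrightarrow> bij_betw f V V' \<longrightarrow> (V', (\<lambda>e. f ` e) ` E) \<in> H) \<and>
     (\<forall>V E U. (V, E) \<in> H \<longrightarrow> U \<subseteq> V \<longrightarrow> (U, {e\<in>E. e \<subseteq> U}) \<in> H)"

definition H_n :: "(nat set \<times> nat set set) set \<Rightarrow> nat \<Rightarrow> nat set set set" where
  "H_n H n = {E. ({1..n}, E) \<in> H}"

end

theory Submission
  imports Defs
begin

text \<open>Let \<open>Q\<close> be a set of sizes containing \<open>0\<close>, and \<open>\<H>\<close> the class of \<open>r\<close>-graphs in which every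
  set of \<open>q \<in> Q\<close> vertices spans at most \<open>c q\<close> edges. For \<open>n \<in> Q\<close> the condition on the whole
  vertex set leaves at most \<open>\<lfloor>c n\<rfloor>\<close> edges, so \<open>|\<H>\<^sub>n| \<le> n\<^bsup>(r-1)(c+o(1))n\<^esup>\<close>. Conversely, a random
  \<open>r\<close>-graph on \<open>[n]\<close> with \<open>M \<le> n\<^bsup>r-\<alpha>\<^esup>\<close> edges contains a \<open>q\<close>-set spanning more than \<open>c q\<close> edges
  with probability about \<open>n\<^bsup>q\<^esup> (M / n\<^bsup>r\<^esup>)\<^bsup>\<lfloor>c q\<rfloor>+1\<^esup> \<le> n\<^bsup>q-\<alpha>(\<lfloor>c q\<rfloor>+1)\<^esup>\<close>, which tends to \<open>0\<close> when
  \<open>\<alpha> c \<ge> 1\<close>. Choosing the elements of \<open>Q\<close> one by one, each far beyond the previous ones, at least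
  half of all such graphs lie in \<open>\<H>\<^sub>n\<close>: with \<open>M = \<lfloor>c n\<rfloor>\<close>, \<open>\<alpha> = r - 1\<close> for \<open>n \<in> Q\<close>, which
  matches the upper bound, and with \<open>M = \<lceil>n\<^bsup>r-\<epsilon>\<^esup>\<rceil>\<close>, \<open>\<alpha> = \<epsilon>\<close> for a size \<open>n \<notin> Q\<close> chosen before the
  next element of \<open>Q\<close>.\<close>

section \<open>Locally sparse hypergraphs\<close>

definition locally_sparse :: "nat \<Rightarrow> real \<Rightarrow> nat set \<Rightarrow> (nat set \<times> nat set set) set" where
  "locally_sparse r c Q = {(V, E). uniform_hg r V E \<and>
     (\<forall>X \<subseteq> V. card X \<in> Q \<longrightarrow> real (card {e\<in>E. e \<subseteq> X}) \<le> c * real (card X))}"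

lemma card_edges_within_image_le:
  assumes inj: "inj_on f V" and E: "\<forall>e\<in>E. e \<subseteq> V" "finite E" and X: "X \<subseteq> V"
  shows "card {e'\<in>(\<lambda>e. f ` e) ` E. e' \<subseteq> f ` X} \<le> card {e\<in>E. e \<subseteq> X}"
proof -
  have "e \<subseteq> X" if "e \<in> E" "f ` e \<subseteq> f ` X" for e
    using that E X inj_on_image_mem_iff[OF inj] by blast
  then have "{e'\<in>(\<lambda>e. f ` e) ` E. e' \<subseteq> f ` X} \<subseteq> (\<lambda>e. f ` e) ` {e\<in>E. e \<subseteq> X}"
    by blast
  then have "card {e'\<in>(\<lambda>e. f ` e) ` E. e' \<subseteq> f ` X} \<le> card ((\<lambda>e. f ` e) ` {e\<in>E. e \<subseteq> X})"
    using \<open>finite E\<close> by (intro card_mono) auto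
  also have "\<dots> \<le> card {e\<in>E. e \<subseteq> X}"
    using \<open>finite E\<close> by (intro card_image_le) auto
  finally show ?thesis .
qed

lemma uniform_hg_image:
  assumes "uniform_hg r V E" "inj_on f V"
  shows "uniform_hg r (f ` V) ((\<lambda>e. f ` e) ` E)"
  using assms unfolding uniform_hg_def by (auto simp: card_image inj_on_subset)

lemma locally_sparse_image:
  assumes VE: "(V, E) \<in> locally_sparse r c Q" and f: "bij_betw f V V'"
  shows "(V', (\<lambda>e. f ` e) ` E) \<in> locally_sparse r c Q"
proof -
  have u: "uniform_hg r V E"
    and sparse: "\<And>X. X \<subseteq> V \<Longrightarrow> card X \<in> Q \<Longrightarrow> real (card {e\<in>E. e \<subseteq> X}) \<le> c * real (card X)"
    using VE by (auto simp: locally_sparse_def)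
  have inj: "inj_on f V" and V': "V' = f ` V" using f by (auto simp: bij_betw_def)
  have E: "\<forall>e\<in>E. e \<subseteq> V" "finite E"
    using u by (auto simp: uniform_hg_def intro: finite_subset[of E "Pow V"])
  have "real (card {e'\<in>(\<lambda>e. f ` e) ` E. e' \<subseteq> X'}) \<le> c * real (card X')"
    if X': "X' \<subseteq> V'" "card X' \<in> Q" for X'
  proof -
    define X where "X = inv_into V f ` X'"
    have X: "X \<subseteq> V" "f ` X = X'"
      unfolding X_def using X' V' by (auto simp: inv_into_into image_inv_into_cancel)
    then have "card X = card X'" using inj by (metis card_image inj_on_subset)
    then show ?thesis
      using card_edges_within_image_le[OF inj E X(1)] sparse[OF X(1)] X' X(2) by simp
  qed
  then show ?thesis using uniform_hg_image[OF u inj] V' by (simp add: locally_sparse_def)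
qed

lemma locally_sparse_induced:
  assumes VE: "(V, E) \<in> locally_sparse r c Q" and "U \<subseteq> V"
  shows "(U, {e\<in>E. e \<subseteq> U}) \<in> locally_sparse r c Q"
proof -
  have "{e\<in>{e\<in>E. e \<subseteq> U}. e \<subseteq> X} = {e\<in>E. e \<subseteq> X}" if "X \<subseteq> U" for X
    using that by auto
  then show ?thesis
    using assms by (auto simp: locally_sparse_def uniform_hg_def intro: finite_subset)
qed

lemma hereditary_locally_sparse: "hereditary_property r (locally_sparse r c Q)"
  unfolding hereditary_property_def
  using locally_sparse_image locally_sparse_induced by (auto simp: locally_sparse_def)

section \<open>Binomial and asymptotic estimates\<close>

lemma binomial_diff_le_ratio_pow:
  fixes t M N :: nat
  assumes "t \<le> M" "M \<le> N"
  shows "real ((N - t) choose (M - t)) \<le> real (N choose M) * (real M / real N) ^ t"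
  using assms
proof (induction t)
  case 0
  then show ?case by simp
next
  case (Suc t)
  define a where "a = N - Suc t"
  define b where "b = M - Suc t"
  have a: "N - t = Suc a" and b: "M - t = Suc b" and ba: "b \<le> a"
    using Suc.prems unfolding a_def b_def by auto
  have ratio: "real (Suc b) / real (Suc a) \<le> real M / real N"
  proof -
    have "real (Suc b) * real N \<le> real M * real (Suc a)"
    proof -
      have "real M = real (Suc b) + real t" "real N = real (Suc a) + real t"
        using a b Suc.prems by auto
      then show ?thesis using ba by (simp add: algebra_simps mult_right_mono)
    qed
    then show ?thesis using Suc.prems by (simp add: field_simps)
  qed
  have "real (a choose b) = real (Suc a choose Suc b) * (real (Suc b) / real (Suc a))"
    using Suc_times_binomial[of b a] by (simp add: field_simps flip: of_nat_mult)
  also have "\<dots> \<le> real (N choose M) * (real M / real N) ^ t * (real M / real N)"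
    using Suc a b ratio by (intro mult_mono) auto
  finally show ?case unfolding a_def b_def by (simp add: mult_ac)
qed

lemma card_supersets_le:
  assumes A: "finite A" and T: "T \<subseteq> A" "card T = t" and M: "M \<le> card A"
  shows "real (card {E. E \<subseteq> A \<and> card E = M \<and> T \<subseteq> E})
    \<le> real (card A choose M) * (real M / real (card A)) ^ t"
proof (cases "t \<le> M")
  case False
  have "card T \<le> M" if "E \<subseteq> A" "card E = M" "T \<subseteq> E" for E
    using that A card_mono finite_subset by metis
  then have empty: "{E. E \<subseteq> A \<and> card E = M \<and> T \<subseteq> E} = {}"
    using False T by auto
  show ?thesis unfolding empty by simp
next
  case True
  have "finite T" using T A finite_subset by blast
  have "inj_on (\<lambda>E. E - T) {E. E \<subseteq> A \<and> card E = M \<and> T \<subseteq> E}"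
    by (intro inj_onI) auto
  moreover have "(\<lambda>E. E - T) ` {E. E \<subseteq> A \<and> card E = M \<and> T \<subseteq> E} \<subseteq> {B. B \<subseteq> A - T \<and> card B = M - t}"
    using T \<open>finite T\<close> by (auto simp: card_Diff_subset)
  ultimately have "card {E. E \<subseteq> A \<and> card E = M \<and> T \<subseteq> E} \<le> card {B. B \<subseteq> A - T \<and> card B = M - t}"
    using A by (intro card_inj_on_le) auto
  also have "\<dots> = (card A - t) choose (M - t)"
    using n_subsets[of "A - T" "M - t"] A T \<open>finite T\<close> by (simp add: card_Diff_subset)
  finally show ?thesis
    using binomial_diff_le_ratio_pow[OF True M] by (simp flip: of_nat_le_iff)
qed

lemma binomial_le_power: "n choose k \<le> n ^ k"
  using binomial_fact_pow[of n k] fact_ge_1[of k] by (metis dual_order.trans mult_le_mono2 mult_1_right of_nat_le_iff of_nat_fact)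

lemma sum_exp_series_le_exp: "0 \<le> x \<Longrightarrow> (\<Sum>j\<le>M. x ^ j / fact j) \<le> exp (x::real)"
  using sum_le_suminf[OF summable_exp, of "{..M}" x] by (simp add: exp_def inverse_eq_divide)

lemma sum_binomial_le:
  fixes M N :: nat
  assumes "1 \<le> M" "M \<le> N"
  shows "real (\<Sum>j\<le>M. N choose j) \<le> (exp 1 * real N / real M) ^ M"
proof -
  have M0: "real M > 0" using assms by simp
  have q1: "real N / real M \<ge> 1" using assms by simp
  have "real (\<Sum>j\<le>M. N choose j) \<le> (\<Sum>j\<le>M. (real N / real M) ^ M * (real M ^ j / fact j))"
    unfolding of_nat_sum
  proof (intro sum_mono)
    fix j assume j: "j \<in> {..M}"
    have "real (N choose j) \<le> real N ^ j / fact j"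
      using binomial_fact_pow[of N j]
      by (simp add: field_simps) (metis of_nat_fact of_nat_le_iff of_nat_mult of_nat_power)
    also have "\<dots> = (real N / real M) ^ j * (real M ^ j / fact j)"
      using M0 by (simp add: power_divide)
    also have "\<dots> \<le> (real N / real M) ^ M * (real M ^ j / fact j)"
      using q1 j by (intro mult_right_mono power_increasing) auto
    finally show "real (N choose j) \<le> (real N / real M) ^ M * (real M ^ j / fact j)" .
  qed
  also have "\<dots> = (real N / real M) ^ M * (\<Sum>j\<le>M. real M ^ j / fact j)"
    by (simp add: sum_distrib_left)
  also have "\<dots> \<le> (real N / real M) ^ M * exp (real M)"
    using sum_exp_series_le_exp[of "real M" M] by (intro mult_left_mono) auto
  also have "\<dots> = (exp 1 * real N / real M) ^ M"
    using exp_of_nat_mult[of M "1::real"] by (simp add: power_divide power_mult_distrib)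
  finally show ?thesis .
qed

lemma two_power_le_half_binomial:
  assumes M: "1 \<le> M" "4 * M \<le> N"
  shows "2 ^ M \<le> real (N choose M) / 2"
proof -
  have "4 * real M \<le> real N"
    using of_nat_mono[OF M(2)] by simp
  then have "(4::real) \<le> real N / real M"
    using M(1) by (simp add: le_divide_eq)
  then have "(2::real) ^ M * 2 ^ M \<le> (real N / real M) ^ M"
    by (simp add: power_mono flip: power_mult_distrib)
  also have "\<dots> \<le> real (N choose M)"
    using M by (intro binomial_ge_n_over_k_pow_k) simp
  finally have "(2::real) ^ M * 2 ^ M \<le> real (N choose M)" .
  moreover have "2 * 2 ^ M \<le> (2::real) ^ M * 2 ^ M"
    using power_increasing[OF M(1), of "2::real"] by (intro mult_right_mono) auto
  ultimately show ?thesis by linarith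
qed

lemma ln_between_binomial_bounds:
  fixes M N :: nat and G :: real
  assumes M: "1 \<le> M" "M \<le> N"
    and G: "real (N choose M) / 2 \<le> G" "G \<le> (exp 1 * real N / real M) ^ M"
  shows "0 < G"
    and "real M * ln (real N / real M) - ln 2 \<le> ln G"
    and "ln G \<le> real M * (1 + ln (real N / real M))"
proof -
  have q: "real N / real M > 0" using M by simp
  have low: "(real N / real M) ^ M / 2 \<le> G"
    using binomial_ge_n_over_k_pow_k[OF M(2), where 'a = real] G(1) by simp
  moreover have "0 < (real N / real M) ^ M / 2" using q by simp
  ultimately show G_pos: "0 < G" by linarith
  have "ln ((real N / real M) ^ M / 2) \<le> ln G"
    using low q G_pos by (subst ln_le_cancel_iff) auto
  moreover have "ln ((real N / real M) ^ M / 2) = real M * ln (real N / real M) - ln 2"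
    using q by (simp only: ln_divide_pos[of "(real N / real M) ^ M" 2] ln_realpow zero_less_power
        zero_less_numeral)
  ultimately show "real M * ln (real N / real M) - ln 2 \<le> ln G" by simp
  have "ln G \<le> ln ((exp 1 * (real N / real M)) ^ M)"
    using G(2) G_pos q by (subst ln_le_cancel_iff) auto
  also have "\<dots> = real M * (1 + ln (real N / real M))"
    using q by (simp only: ln_realpow ln_mult_pos[of "exp 1" "real N / real M"] ln_exp exp_gt_zero)
  finally show "ln G \<le> real M * (1 + ln (real N / real M))" .
qed

lemma eventually_ex_greater: "\<forall>\<^sub>F n in sequentially. P n \<Longrightarrow> \<exists>n>m. P n"
  using eventually_happens'[OF sequentially_bot eventually_conj[OF eventually_gt_at_top[of m]]] by blast

lemma tendsto_inverse_ln_sequentially: "((\<lambda>n. inverse (ln (real n))) \<longlongrightarrow> 0) sequentially"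
  by (rule tendsto_inverse_0_at_top[OF filterlim_compose[OF ln_at_top filterlim_real_sequentially]])

lemma tendsto_ln_binomial_div_ln:
  assumes "r > 0"
  shows "((\<lambda>n. ln (real (n choose r)) / ln (real n)) \<longlongrightarrow> real r) sequentially"
proof (rule tendsto_sandwich)
  show "((\<lambda>n. real r - real r * ln (real r) * inverse (ln (real n))) \<longlongrightarrow> real r) sequentially"
    using tendsto_diff[OF tendsto_const tendsto_mult[OF tendsto_const tendsto_inverse_ln_sequentially]]
    by (simp add: tendsto_cong_limit)
  show "\<forall>\<^sub>F n in sequentially. real r - real r * ln (real r) * inverse (ln (real n))
      \<le> ln (real (n choose r)) / ln (real n)"
    using eventually_ge_at_top[of "max r 2"]
  proof eventually_elim
    case (elim n)
    have l: "ln (real n) > 0" using elim by simp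
    have "real r * ln (real n / real r) \<le> ln (real (n choose r))"
      using binomial_ge_n_over_k_pow_k[of r n, where 'a = real] elim assms
      by (subst ln_realpow[symmetric]) (auto intro: ln_mono)
    then have "real r * ln (real n) - real r * ln (real r) \<le> ln (real (n choose r))"
      using elim assms by (simp add: ln_div algebra_simps)
    from divide_right_mono[OF this, of "ln (real n)"] show ?case
      using l by (simp add: diff_divide_distrib inverse_eq_divide)
  qed
  show "\<forall>\<^sub>F n in sequentially. ln (real (n choose r)) / ln (real n) \<le> real r"
    using eventually_ge_at_top[of "max r 2"]
  proof eventually_elim
    case (elim n)
    have "real (n choose r) \<le> real n ^ r"
      using binomial_le_power[of n r] by (simp flip: of_nat_power)
    then have "ln (real (n choose r)) \<le> real r * ln (real n)"
      using elim by (subst ln_realpow[symmetric]) (auto intro: ln_mono)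
    then show ?case using elim by (simp add: field_simps)
  qed
qed (rule tendsto_const)

section \<open>Counting locally sparse hypergraphs\<close>

locale sparse_density =
  fixes r :: nat and c :: real
  assumes r_pos: "r > 0" and c_pos: "c > 0"
begin

definition threshold :: "nat \<Rightarrow> nat" where
  "threshold q = nat \<lfloor>c * real q\<rfloor> + 1"

lemma le_iff_less_threshold: "real k \<le> c * real q \<longleftrightarrow> k < threshold q"
proof -
  have cq: "c * real q \<ge> 0" using c_pos by simp
  have "real k \<le> c * real q \<longleftrightarrow> k \<le> nat \<lfloor>c * real q\<rfloor>"
    using le_nat_floor of_nat_floor[OF cq] by (meson of_nat_le_iff order_trans)
  then show ?thesis unfolding threshold_def by (simp add: less_Suc_eq_le)
qed

lemma less_mult_threshold:
  assumes "\<alpha> * c \<ge> 1" "\<alpha> > 0"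
  shows "real q < \<alpha> * real (threshold q)"
proof -
  have "c * real q < real (threshold q)"
    using le_iff_less_threshold[of "threshold q" q] by simp
  then have "\<alpha> * (c * real q) < \<alpha> * real (threshold q)"
    using assms(2) by simp
  moreover have "real q \<le> \<alpha> * c * real q"
    using assms(1) by (simp add: mult_right_mono[of 1 "\<alpha> * c" "real q", simplified])
  ultimately show ?thesis by (simp add: mult.assoc)
qed

definition all_edges :: "nat \<Rightarrow> nat set set" where
  "all_edges n = {e. e \<subseteq> {1..n} \<and> card e = r}"

lemma finite_all_edges: "finite (all_edges n)"
  unfolding all_edges_def by (rule finite_subset[of _ "Pow {1..n}"]) auto

lemma card_all_edges: "card (all_edges n) = n choose r"
  unfolding all_edges_def using n_subsets[of "{1..n}" r] by simp

lemma card_all_edges_within: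
  assumes "X \<subseteq> {1..n}"
  shows "card {e\<in>all_edges n. e \<subseteq> X} = card X choose r"
proof -
  have "{e\<in>all_edges n. e \<subseteq> X} = {e. e \<subseteq> X \<and> card e = r}"
    using assms unfolding all_edges_def by auto
  then show ?thesis using n_subsets[of X r] finite_subset[OF assms] by simp
qed

definition sparse_on :: "nat set \<Rightarrow> nat \<Rightarrow> nat set set \<Rightarrow> bool" where
  "sparse_on F n E \<longleftrightarrow> (\<forall>X \<subseteq> {1..n}. card X \<in> F \<longrightarrow> real (card {e\<in>E. e \<subseteq> X}) \<le> c * real (card X))"

definition sparse_graphs :: "nat \<Rightarrow> nat set \<Rightarrow> nat \<Rightarrow> nat set set set" where
  "sparse_graphs n F M = {E. E \<subseteq> all_edges n \<and> card E = M \<and> sparse_on F n E}"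

text \<open>Union bound, over the sizes \<open>q \<in> F\<close>, the \<open>q\<close>-sets \<open>X\<close> and the \<open>threshold q\<close>-sets of
  edges inside \<open>X\<close>, for the fraction of \<open>M\<close>-edge hypergraphs on \<open>[n]\<close> that are not \<open>sparse_on F\<close>.\<close>
definition violation_bound :: "nat set \<Rightarrow> nat \<Rightarrow> nat \<Rightarrow> real" where
  "violation_bound F n M = (\<Sum>q\<in>F. real (n choose q) * real (q choose r) ^ threshold q
     * (real M / real (n choose r)) ^ threshold q)"

lemma card_edge_sets_within_le:
  assumes "X \<subseteq> {1..n}"
  shows "real (card {T. T \<subseteq> {e\<in>all_edges n. e \<subseteq> X} \<and> card T = t}) \<le> real (card X choose r) ^ t"
proof -
  have "card {T. T \<subseteq> {e\<in>all_edges n. e \<subseteq> X} \<and> card T = t} = (card X choose r) choose t"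
    using n_subsets[of "{e\<in>all_edges n. e \<subseteq> X}" t] card_all_edges_within[OF assms]
    by (simp add: finite_all_edges)
  also have "\<dots> \<le> (card X choose r) ^ t" by (rule binomial_le_power)
  finally show ?thesis by (simp flip: of_nat_power)
qed

lemma card_dense_within_le:
  assumes X: "X \<subseteq> {1..n}" and M: "M \<le> n choose r"
  defines "t \<equiv> threshold (card X)"
  shows "real (card {E. E \<subseteq> all_edges n \<and> card E = M \<and> t \<le> card {e\<in>E. e \<subseteq> X}})
    \<le> real (card X choose r) ^ t * (real ((n choose r) choose M) * (real M / real (n choose r)) ^ t)"
proof -
  define Ts where "Ts = {T. T \<subseteq> {e\<in>all_edges n. e \<subseteq> X} \<and> card T = t}"
  have fin_Ts: "finite Ts"
    unfolding Ts_def by (rule finite_subset[of _ "Pow (all_edges n)"]) (auto simp: finite_all_edges)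
  define Contain where "Contain T = {E. E \<subseteq> all_edges n \<and> card E = M \<and> T \<subseteq> E}" for T
  have "{E. E \<subseteq> all_edges n \<and> card E = M \<and> t \<le> card {e\<in>E. e \<subseteq> X}} \<subseteq> (\<Union>T\<in>Ts. Contain T)"
  proof
    fix E assume E: "E \<in> {E. E \<subseteq> all_edges n \<and> card E = M \<and> t \<le> card {e\<in>E. e \<subseteq> X}}"
    then have "t \<le> card {e\<in>E. e \<subseteq> X}" by simp
    then obtain T where T: "T \<subseteq> {e\<in>E. e \<subseteq> X}" "card T = t"
      by (rule obtain_subset_with_card_n)
    have "T \<in> Ts" "E \<in> Contain T"
      using T E unfolding Ts_def Contain_def by auto
    then show "E \<in> (\<Union>T\<in>Ts. Contain T)" by blast
  qed
  moreover have "finite (\<Union>T\<in>Ts. Contain T)"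
    unfolding Contain_def by (rule finite_subset[of _ "Pow (all_edges n)"]) (auto simp: finite_all_edges)
  ultimately have "card {E. E \<subseteq> all_edges n \<and> card E = M \<and> t \<le> card {e\<in>E. e \<subseteq> X}}
      \<le> card (\<Union>T\<in>Ts. Contain T)"
    by (rule card_mono[rotated])
  also have "\<dots> \<le> (\<Sum>T\<in>Ts. card (Contain T))"
    using fin_Ts by (rule card_UN_le)
  finally have "real (card {E. E \<subseteq> all_edges n \<and> card E = M \<and> t \<le> card {e\<in>E. e \<subseteq> X}})
      \<le> (\<Sum>T\<in>Ts. real (card (Contain T)))"
    by (simp flip: of_nat_sum)
  also have "\<dots> \<le> (\<Sum>T\<in>Ts. real ((n choose r) choose M) * (real M / real (n choose r)) ^ t)"
  proof (intro sum_mono)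
    fix T assume "T \<in> Ts"
    then have "T \<subseteq> all_edges n" "card T = t" unfolding Ts_def by auto
    then show "real (card (Contain T)) \<le> real ((n choose r) choose M) * (real M / real (n choose r)) ^ t"
      using card_supersets_le[OF finite_all_edges _ _ ] M unfolding Contain_def card_all_edges by simp
  qed
  also have "\<dots> \<le> real (card X choose r) ^ t * (real ((n choose r) choose M) * (real M / real (n choose r)) ^ t)"
    using card_edge_sets_within_le[OF X, of t] unfolding Ts_def[symmetric] by (simp add: mult_right_mono)
  finally show ?thesis .
qed

lemma card_not_sparse_le:
  assumes F: "finite F" and M: "M \<le> n choose r"
  shows "real (card {E. E \<subseteq> all_edges n \<and> card E = M \<and> \<not> sparse_on F n E})
    \<le> real ((n choose r) choose M) * violation_bound F n M"
proof -
  define Xs where "Xs q = {X. X \<subseteq> {1..n} \<and> card X = q}" for q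
  define Dense where
    "Dense X = {E. E \<subseteq> all_edges n \<and> card E = M \<and> threshold (card X) \<le> card {e\<in>E. e \<subseteq> X}}" for X
  have fin_Xs: "finite (Xs q)" for q
    unfolding Xs_def by (rule finite_subset[of _ "Pow {1..n}"]) auto
  have "{E. E \<subseteq> all_edges n \<and> card E = M \<and> \<not> sparse_on F n E} \<subseteq> (\<Union>q\<in>F. \<Union>X\<in>Xs q. Dense X)"
    unfolding Dense_def Xs_def sparse_on_def by (fastforce simp: le_iff_less_threshold not_le)
  moreover have "finite (\<Union>q\<in>F. \<Union>X\<in>Xs q. Dense X)"
    unfolding Dense_def by (rule finite_subset[of _ "Pow (all_edges n)"]) (auto simp: finite_all_edges)
  ultimately have "card {E. E \<subseteq> all_edges n \<and> card E = M \<and> \<not> sparse_on F n E}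
      \<le> card (\<Union>q\<in>F. \<Union>X\<in>Xs q. Dense X)"
    by (rule card_mono[rotated])
  also have "\<dots> \<le> (\<Sum>q\<in>F. card (\<Union>X\<in>Xs q. Dense X))"
    using F by (rule card_UN_le)
  also have "\<dots> \<le> (\<Sum>q\<in>F. \<Sum>X\<in>Xs q. card (Dense X))"
    using fin_Xs by (intro sum_mono card_UN_le)
  finally have "real (card {E. E \<subseteq> all_edges n \<and> card E = M \<and> \<not> sparse_on F n E})
      \<le> (\<Sum>q\<in>F. \<Sum>X\<in>Xs q. real (card (Dense X)))"
    by (simp flip: of_nat_sum)
  also have "\<dots> \<le> (\<Sum>q\<in>F. \<Sum>X\<in>Xs q. real (q choose r) ^ threshold q
      * (real ((n choose r) choose M) * (real M / real (n choose r)) ^ threshold q))"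
  proof (intro sum_mono)
    fix q X assume "X \<in> Xs q"
    then show "real (card (Dense X)) \<le> real (q choose r) ^ threshold q
        * (real ((n choose r) choose M) * (real M / real (n choose r)) ^ threshold q)"
      using card_dense_within_le[OF _ M, of X] unfolding Dense_def Xs_def by auto
  qed
  also have "\<dots> = real ((n choose r) choose M) * violation_bound F n M"
    unfolding violation_bound_def Xs_def
    using n_subsets[of "{1..n}"] by (simp add: sum_distrib_left mult_ac)
  finally show ?thesis .
qed

lemma card_sparse_graphs_ge:
  assumes F: "finite F" and M: "M \<le> n choose r" and bound: "violation_bound F n M \<le> 1/2"
  shows "real (card (sparse_graphs n F M)) \<ge> real ((n choose r) choose M) / 2"
proof -
  define Bad where "Bad = {E. E \<subseteq> all_edges n \<and> card E = M \<and> \<not> sparse_on F n E}"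
  have fin: "finite {E. E \<subseteq> all_edges n \<and> card E = M}"
    by (rule finite_subset[of _ "Pow (all_edges n)"]) (auto simp: finite_all_edges)
  have "{E. E \<subseteq> all_edges n \<and> card E = M} = sparse_graphs n F M \<union> Bad"
    "sparse_graphs n F M \<inter> Bad = {}"
    unfolding sparse_graphs_def Bad_def by auto
  then have "(n choose r) choose M = card (sparse_graphs n F M) + card Bad"
    using n_subsets[OF finite_all_edges[of n], of M] fin
    by (simp add: card_all_edges card_Un_disjoint)
  moreover have "real (card Bad) \<le> real ((n choose r) choose M) / 2"
    using card_not_sparse_le[OF F M] mult_left_mono[OF bound, of "real ((n choose r) choose M)"]
    unfolding Bad_def by simp
  ultimately show ?thesis by (simp flip: of_nat_add)
qed

lemma edge_ratio_le:
  assumes n: "r \<le> n" "0 < n" and M: "real M \<le> D * real n powr (real r - \<alpha>)" and D: "D \<ge> 0"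
  shows "real M / real (n choose r) \<le> D * real r ^ r * real n powr (- \<alpha>)"
proof -
  have r: "real r > 0" using r_pos by simp
  have N: "real n powr real r / real r ^ r \<le> real (n choose r)"
    using binomial_ge_n_over_k_pow_k[OF n(1), where 'a = real] n(2)
    by (simp add: power_divide powr_realpow)
  have N_pos: "0 < real n powr real r / real r ^ r" using n(2) r by simp
  have "real M / real (n choose r) \<le> D * real n powr (real r - \<alpha>) / (real n powr real r / real r ^ r)"
    using M N N_pos D by (intro frac_le) auto
  also have "\<dots> = D * real r ^ r * real n powr (- \<alpha>)"
    using n(2) r by (simp add: powr_diff powr_minus field_simps)
  finally show ?thesis .
qed

lemma violation_term_le:
  assumes n: "r \<le> n" "0 < n" and M: "real M \<le> D * real n powr (real r - \<alpha>)" and D: "D \<ge> 0"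
  shows "real (n choose q) * real (q choose r) ^ t * (real M / real (n choose r)) ^ t
    \<le> (real (q choose r) * D * real r ^ r) ^ t * real n powr (real q - \<alpha> * real t)"
proof -
  note ratio = edge_ratio_le[OF assms]
  have choose: "real (n choose q) \<le> real n powr real q"
    using binomial_le_power[of n q] n(2) by (simp add: powr_realpow flip: of_nat_le_iff)
  have "real (n choose q) * real (q choose r) ^ t * (real M / real (n choose r)) ^ t
      \<le> real n powr real q * real (q choose r) ^ t * (D * real r ^ r * real n powr (- \<alpha>)) ^ t"
    using choose ratio by (intro mult_mono power_mono) auto
  also have "\<dots> = (real (q choose r) * D * real r ^ r) ^ t * (real n powr real q * (real n powr (- \<alpha>)) ^ t)"
    by (simp add: power_mult_distrib mult_ac)
  also have "(real n powr (- \<alpha>)) ^ t = real n powr (- \<alpha> * real t)"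
    using n(2) by (simp add: powr_realpow[symmetric] powr_powr)
  finally show ?thesis
    by (simp add: powr_add[symmetric])
qed

lemma eventually_violation_bound_le:
  assumes F: "finite F" and \<alpha>: "\<alpha> > 0" "\<alpha> * c \<ge> 1" and D: "D \<ge> 0"
  shows "\<forall>\<^sub>F n in sequentially. \<forall>M. real M \<le> D * real n powr (real r - \<alpha>) \<longrightarrow> violation_bound F n M \<le> 1/2"
proof -
  define K where "K q = (real (q choose r) * D * real r ^ r) ^ threshold q" for q
  define e where "e q = real q - \<alpha> * real (threshold q)" for q
  have "e q < 0" for q
    using less_mult_threshold[OF \<alpha>(2,1)] unfolding e_def by simp
  then have "((\<lambda>n. \<Sum>q\<in>F. K q * real n powr e q) \<longlongrightarrow> 0) sequentially"
    by (intro tendsto_null_sum tendsto_mult_right_zero tendsto_neg_powr filterlim_real_sequentially)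
  then have "\<forall>\<^sub>F n in sequentially. (\<Sum>q\<in>F. K q * real n powr e q) < 1/2"
    by (rule order_tendstoD) simp
  moreover have "\<forall>\<^sub>F n in sequentially. max r 1 \<le> n"
    by (rule eventually_ge_at_top)
  ultimately show ?thesis
  proof eventually_elim
    case (elim n)
    show ?case
    proof (intro allI impI)
      fix M assume "real M \<le> D * real n powr (real r - \<alpha>)"
      then have "violation_bound F n M \<le> (\<Sum>q\<in>F. K q * real n powr e q)"
        unfolding violation_bound_def K_def e_def
        using violation_term_le[of n M D \<alpha>] elim D by (intro sum_mono) auto
      then show "violation_bound F n M \<le> 1/2" using elim by linarith
    qed
  qed
qed

lemma eventually_four_mult_le_binomial:
  assumes \<alpha>: "\<alpha> > 0" and D: "D \<ge> 0"
  shows "\<forall>\<^sub>F n in sequentially. \<forall>M. real M \<le> D * real n powr (real r - \<alpha>) \<longrightarrow> 4 * M \<le> n choose r"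
proof -
  have "((\<lambda>n. D * real r ^ r * real n powr (- \<alpha>)) \<longlongrightarrow> D * real r ^ r * 0) sequentially"
    using \<alpha> by (intro tendsto_mult tendsto_const tendsto_neg_powr filterlim_real_sequentially) simp
  then have "\<forall>\<^sub>F n in sequentially. D * real r ^ r * real n powr (- \<alpha>) < 1/4"
    by (rule order_tendstoD) simp
  moreover have "\<forall>\<^sub>F n in sequentially. max r 1 \<le> n"
    by (rule eventually_ge_at_top)
  ultimately show ?thesis
  proof eventually_elim
    case (elim n)
    have n: "r \<le> n" "0 < n" and N: "real (n choose r) > 0" using elim by auto
    show ?case
    proof (intro allI impI)
      fix M assume "real M \<le> D * real n powr (real r - \<alpha>)"
      from edge_ratio_le[OF n this D] have "real M / real (n choose r) < 1/4"
        using elim(1) by linarith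
      then have "real (4 * M) < real (n choose r)"
        using N by (simp add: field_simps)
      then show "4 * M \<le> n choose r" by (simp only: of_nat_less_iff)
    qed
  qed
qed

text \<open>The factor 4 makes \<open>(n choose r) choose M\<close> at least \<open>2 * 2 ^ M\<close>.\<close>
definition good_size :: "nat set \<Rightarrow> nat \<Rightarrow> nat \<Rightarrow> bool" where
  "good_size F n M \<longleftrightarrow> 1 \<le> M \<and> 4 * M \<le> n choose r \<and> violation_bound F n M \<le> 1/2"

lemma eventually_good_size:
  assumes "finite F" "\<alpha> > 0" "\<alpha> * c \<ge> 1" "D \<ge> 0"
    and "\<forall>\<^sub>F n in sequentially. 1 \<le> m n \<and> real (m n) \<le> D * real n powr (real r - \<alpha>)"
  shows "\<forall>\<^sub>F n in sequentially. good_size F n (m n)"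
  using eventually_violation_bound_le[OF assms(1-4)] eventually_four_mult_le_binomial[OF assms(2,4)] assms(5)
  by eventually_elim (auto simp: good_size_def)

end

section \<open>The construction\<close>

locale sparse_construction = sparse_density +
  fixes \<epsilon> :: real
  assumes c_ge: "(real r - 1) * c \<ge> 1" and eps_c: "\<epsilon> * c > 1" and eps_le_r: "\<epsilon> \<le> real r"
begin

lemma r_gt_1: "real r - 1 > 0"
  using zero_less_mult_pos2[of "real r - 1" c] c_ge c_pos by simp

definition m_tight :: "nat \<Rightarrow> nat" where
  "m_tight n = nat \<lfloor>c * real n\<rfloor>"

definition m_large :: "nat \<Rightarrow> nat" where
  "m_large n = nat \<lceil>real n powr (real r - \<epsilon>)\<rceil>"

lemma m_tight_bounds: "c * real n - 1 < real (m_tight n)" "real (m_tight n) \<le> c * real n"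
proof -
  have cn: "c * real n \<ge> 0" using c_pos by simp
  then show "c * real n - 1 < real (m_tight n)"
    unfolding m_tight_def using real_of_int_floor_add_one_gt[of "c * real n"] by simp
  show "real (m_tight n) \<le> c * real n"
    unfolding m_tight_def using cn by (rule of_nat_floor)
qed

lemma eventually_c_mult_ge: "\<forall>\<^sub>F n in sequentially. C \<le> c * real n"
proof -
  have "\<forall>\<^sub>F n in sequentially. C / c \<le> real n"
    using filterlim_real_sequentially unfolding filterlim_at_top by blast
  then show ?thesis
    by eventually_elim (use c_pos in \<open>simp add: field_simps\<close>)
qed

lemma eventually_good_tight:
  assumes "finite F"
  shows "\<forall>\<^sub>F n in sequentially. good_size F n (m_tight n)"
proof (rule eventually_good_size[OF assms _ _ less_imp_le[OF c_pos]])
  show "real r - 1 > 0" "(real r - 1) * c \<ge> 1" using r_gt_1 c_ge by auto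
  show "\<forall>\<^sub>F n in sequentially. 1 \<le> m_tight n \<and> real (m_tight n) \<le> c * real n powr (real r - (real r - 1))"
    using eventually_c_mult_ge[of 2]
  proof eventually_elim
    case (elim n)
    then have "0 < real n" by (cases "n = 0") auto
    moreover have "1 < real (m_tight n)" using m_tight_bounds(1)[of n] elim by linarith
    ultimately show ?case using m_tight_bounds(2)[of n] by simp
  qed
qed

lemma eventually_good_large:
  assumes "finite F"
  shows "\<forall>\<^sub>F n in sequentially. good_size F n (m_large n)"
proof (rule eventually_good_size[of _ \<epsilon> 2])
  show "\<epsilon> > 0" using zero_less_mult_pos2[of \<epsilon> c] eps_c c_pos by simp
  show "\<epsilon> * c \<ge> 1" using eps_c by simp
  show "\<forall>\<^sub>F n in sequentially. 1 \<le> m_large n \<and> real (m_large n) \<le> 2 * real n powr (real r - \<epsilon>)"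
    using eventually_ge_at_top[of 1]
  proof eventually_elim
    case (elim n)
    define y where "y = real n powr (real r - \<epsilon>)"
    have "y \<ge> 1" unfolding y_def using elim eps_le_r by (intro ge_one_powr_ge_zero) auto
    moreover have "real (m_large n) = real_of_int \<lceil>y\<rceil>"
      unfolding m_large_def y_def[symmetric] using \<open>y \<ge> 1\<close> by simp
    moreover have "y \<le> real_of_int \<lceil>y\<rceil>" "real_of_int \<lceil>y\<rceil> \<le> y + 1"
      by (rule le_of_int_ceiling, rule of_int_ceiling_le_add_one)
    ultimately show ?case unfolding y_def[symmetric] by linarith
  qed
qed (use assms in auto)

definition large_after :: "nat set \<Rightarrow> nat" where
  "large_after F = (SOME n. Max F < n \<and> good_size F n (m_large n))"

definition tight_after :: "nat set \<Rightarrow> nat" where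
  "tight_after F = (SOME n. large_after F < n \<and> good_size F n (m_tight n))"

lemma large_after: "finite F \<Longrightarrow> Max F < large_after F \<and> good_size F (large_after F) (m_large (large_after F))"
  unfolding large_after_def by (rule someI_ex) (rule eventually_ex_greater[OF eventually_good_large])

lemma tight_after: "finite F \<Longrightarrow> large_after F < tight_after F \<and> good_size F (tight_after F) (m_tight (tight_after F))"
  unfolding tight_after_def by (rule someI_ex) (rule eventually_ex_greater[OF eventually_good_tight])

text \<open>Each new size \<open>tight_after F\<close> is preceded by a size \<open>large_after F\<close> that stays outside
  \<open>sizes\<close>. The initial \<open>0\<close> only serves to make \<open>Max F\<close> meaningful.\<close>
primrec sizes_upto :: "nat \<Rightarrow> nat set" where
  "sizes_upto 0 = {0}"
| "sizes_upto (Suc k) = insert (tight_after (sizes_upto k)) (sizes_upto k)"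

definition tight_seq :: "nat \<Rightarrow> nat" where
  "tight_seq k = tight_after (sizes_upto k)"

definition sizes :: "nat set" where
  "sizes = insert 0 (range tight_seq)"

lemma sizes_upto_eq: "sizes_upto k = insert 0 (tight_seq ` {..<k})"
  by (induction k) (auto simp: tight_seq_def lessThan_Suc)

lemma finite_sizes_upto: "finite (sizes_upto k)"
  by (simp add: sizes_upto_eq)

lemma Max_sizes_upto_less_large_after: "Max (sizes_upto k) < large_after (sizes_upto k)"
  using large_after[OF finite_sizes_upto] by blast

lemma large_after_less_tight_seq: "large_after (sizes_upto k) < tight_seq k"
  unfolding tight_seq_def using tight_after[OF finite_sizes_upto] by blast

lemma strict_mono_tight_seq: "strict_mono tight_seq"
  unfolding strict_mono_Suc_iff
proof
  fix k
  have "tight_seq k \<le> Max (sizes_upto (Suc k))"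
    using finite_sizes_upto by (simp add: tight_seq_def)
  then show "tight_seq k < tight_seq (Suc k)"
    using Max_sizes_upto_less_large_after[of "Suc k"] large_after_less_tight_seq[of "Suc k"] by linarith
qed

lemma infinite_range_tight_seq: "infinite (range tight_seq)"
  using finite_imageD[OF _ strict_mono_imp_inj_on[OF strict_mono_tight_seq]] by blast

lemma sizes_cases: "q \<in> sizes \<Longrightarrow> q \<in> sizes_upto k \<or> tight_seq k \<le> q"
  using strict_mono_less_eq[OF strict_mono_tight_seq]
  by (auto simp: sizes_def sizes_upto_eq not_less)

lemma sizes_below_tight_seq: "sizes \<inter> {..<tight_seq k} \<subseteq> sizes_upto k"
  using sizes_cases by fastforce

lemma large_after_notin_sizes: "large_after (sizes_upto k) \<notin> sizes"
  using sizes_cases[of "large_after (sizes_upto k)" k] large_after_less_tight_seq[of k]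
    Max_sizes_upto_less_large_after[of k] Max_ge[OF finite_sizes_upto]
  by (meson leD)

lemma large_after_ge: "large_after (sizes_upto (Suc k)) \<ge> k"
proof -
  have "k \<le> tight_seq k" by (rule strict_mono_imp_increasing[OF strict_mono_tight_seq])
  also have "\<dots> \<le> Max (sizes_upto (Suc k))"
    using finite_sizes_upto by (simp add: tight_seq_def)
  finally show ?thesis
    using Max_sizes_upto_less_large_after[of "Suc k"] by linarith
qed

definition H :: "(nat set \<times> nat set set) set" where
  "H = locally_sparse r c sizes"

lemma H_n_eq: "H_n H n = {E. E \<subseteq> all_edges n \<and> sparse_on sizes n E}"
  unfolding H_n_def H_def locally_sparse_def sparse_on_def uniform_hg_def all_edges_def by auto

lemma finite_H_n: "finite (H_n H n)"
  unfolding H_n_eq by (rule finite_subset[of _ "Pow (all_edges n)"]) (auto simp: finite_all_edges)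

lemma sparse_graphs_subset_H_n:
  assumes below: "sizes \<inter> {..<n} \<subseteq> F" and top: "n \<in> sizes \<Longrightarrow> real M \<le> c * real n"
  shows "sparse_graphs n F M \<subseteq> H_n H n"
proof
  fix E assume "E \<in> sparse_graphs n F M"
  then have E: "E \<subseteq> all_edges n" "card E = M" and sparse: "sparse_on F n E"
    unfolding sparse_graphs_def by auto
  have "real (card {e\<in>E. e \<subseteq> X}) \<le> c * real (card X)"
    if X: "X \<subseteq> {1..n}" "card X \<in> sizes" for X
  proof (cases "card X < n")
    case True
    then show ?thesis using below X sparse unfolding sparse_on_def by auto
  next
    case False
    then have "X = {1..n}" using X(1) card_mono[OF _ X(1)] by (intro card_subset_eq) auto
    moreover have "{e\<in>E. e \<subseteq> {1..n}} = E" using E(1) unfolding all_edges_def by auto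
    ultimately show ?thesis using top X(2) E(2) by simp
  qed
  then show "E \<in> H_n H n" unfolding H_n_eq sparse_on_def using E(1) by auto
qed

lemma card_H_n_ge:
  assumes "sizes \<inter> {..<n} \<subseteq> F" "n \<in> sizes \<Longrightarrow> real M \<le> c * real n"
    and F: "finite F" and good: "good_size F n M"
  shows "real ((n choose r) choose M) / 2 \<le> real (card (H_n H n))"
proof -
  have "real ((n choose r) choose M) / 2 \<le> real (card (sparse_graphs n F M))"
    using good by (intro card_sparse_graphs_ge F) (auto simp: good_size_def)
  also have "\<dots> \<le> real (card (H_n H n))"
    using card_mono[OF finite_H_n sparse_graphs_subset_H_n[OF assms(1,2)]] by simp
  finally show ?thesis .
qed

lemma card_H_n_le:
  assumes "n \<in> sizes"
  shows "card (H_n H n) \<le> (\<Sum>j\<le>m_tight n. (n choose r) choose j)"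
proof -
  have "H_n H n \<subseteq> (\<Union>j\<le>m_tight n. {E. E \<subseteq> all_edges n \<and> card E = j})"
  proof
    fix E assume "E \<in> H_n H n"
    then have E: "E \<subseteq> all_edges n" and "sparse_on sizes n E" unfolding H_n_eq by auto
    then have "real (card {e\<in>E. e \<subseteq> {1..n}}) \<le> c * real n"
      using assms unfolding sparse_on_def by auto
    moreover have "{e\<in>E. e \<subseteq> {1..n}} = E" using E unfolding all_edges_def by auto
    ultimately have "card E \<le> m_tight n" unfolding m_tight_def by (simp add: le_nat_floor)
    then show "E \<in> (\<Union>j\<le>m_tight n. {E. E \<subseteq> all_edges n \<and> card E = j})" using E by auto
  qed
  then have "card (H_n H n) \<le> card (\<Union>j\<le>m_tight n. {E. E \<subseteq> all_edges n \<and> card E = j})"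
    by (rule card_mono[rotated]) (auto intro: finite_subset[of _ "Pow (all_edges n)"] simp: finite_all_edges)
  also have "\<dots> \<le> (\<Sum>j\<le>m_tight n. card {E. E \<subseteq> all_edges n \<and> card E = j})"
    by (rule card_UN_le) simp
  finally show ?thesis
    using n_subsets[OF finite_all_edges] by (simp add: card_all_edges)
qed

lemma card_H_n_tight_seq:
  assumes "n \<in> range tight_seq"
  shows "1 \<le> m_tight n" "m_tight n \<le> n choose r"
    and "real ((n choose r) choose m_tight n) / 2 \<le> real (card (H_n H n))"
    and "real (card (H_n H n)) \<le> (exp 1 * real (n choose r) / real (m_tight n)) ^ m_tight n"
proof -
  obtain k where n: "n = tight_seq k" using assms by blast
  have good: "good_size (sizes_upto k) n (m_tight n)"
    using tight_after[OF finite_sizes_upto] unfolding n tight_seq_def by blast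
  then show M: "1 \<le> m_tight n" "m_tight n \<le> n choose r" unfolding good_size_def by auto
  show "real ((n choose r) choose m_tight n) / 2 \<le> real (card (H_n H n))"
    using sizes_below_tight_seq[of k] m_tight_bounds(2) finite_sizes_upto good
    unfolding n by (intro card_H_n_ge) auto
  have "n \<in> sizes" using assms by (simp add: sizes_def)
  then have "real (card (H_n H n)) \<le> real (\<Sum>j\<le>m_tight n. (n choose r) choose j)"
    by (simp only: of_nat_le_iff card_H_n_le)
  also have "\<dots> \<le> (exp 1 * real (n choose r) / real (m_tight n)) ^ m_tight n"
    using sum_binomial_le[OF M] .
  finally show "real (card (H_n H n)) \<le> (exp 1 * real (n choose r) / real (m_tight n)) ^ m_tight n" .
qed

lemma frequently_card_H_n_ge:
  assumes "\<epsilon> \<le> \<delta>"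
  shows "\<exists>\<^sub>F n in sequentially. 2 powr (real n powr (real r - \<delta>)) \<le> real (card (H_n H n))"
  unfolding frequently_sequentially
proof
  fix K
  define b where "b = large_after (sizes_upto (Suc K))"
  define M where "M = m_large b"
  have good: "good_size (sizes_upto (Suc K)) b M"
    using large_after[OF finite_sizes_upto] unfolding b_def M_def by blast
  then have M: "1 \<le> M" "4 * M \<le> b choose r" unfolding good_size_def by auto
  then have "b \<ge> 1" using r_pos by (cases b) (auto simp: binomial_eq_0)
  have "2 powr (real b powr (real r - \<delta>)) \<le> 2 powr (real b powr (real r - \<epsilon>))"
    using \<open>b \<ge> 1\<close> assms by (intro powr_mono) auto
  also have "\<dots> \<le> 2 powr real M"
    unfolding M_def m_large_def by (intro powr_mono of_nat_ceiling) auto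
  also have "\<dots> \<le> real ((b choose r) choose M) / 2"
    using two_power_le_half_binomial[OF M] by (simp add: powr_realpow)
  also have "\<dots> \<le> real (card (H_n H b))"
    using sizes_below_tight_seq[of "Suc K"] large_after_less_tight_seq[of "Suc K"]
      large_after_notin_sizes[of "Suc K"] finite_sizes_upto good
    unfolding b_def by (intro card_H_n_ge) auto
  finally show "\<exists>n\<ge>K. 2 powr (real n powr (real r - \<delta>)) \<le> real (card (H_n H n))"
    using large_after_ge[of K] unfolding b_def by blast
qed

lemma tendsto_m_tight_div: "((\<lambda>n. real (m_tight n) / real n) \<longlongrightarrow> c) sequentially"
proof (rule tendsto_sandwich)
  show "((\<lambda>n. c - inverse (real n)) \<longlongrightarrow> c) sequentially"
    using tendsto_diff[OF tendsto_const lim_inverse_n] by simp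
  show "\<forall>\<^sub>F n in sequentially. c - inverse (real n) \<le> real (m_tight n) / real n"
    using eventually_gt_at_top[of 0]
  proof eventually_elim
    case (elim n)
    have "c - inverse (real n) = (c * real n - 1) / real n" using elim by (simp add: field_simps)
    also have "\<dots> \<le> real (m_tight n) / real n"
      using m_tight_bounds(1)[of n] by (intro divide_right_mono) auto
    finally show ?case .
  qed
  show "\<forall>\<^sub>F n in sequentially. real (m_tight n) / real n \<le> c"
    using eventually_gt_at_top[of 0]
    by eventually_elim (use m_tight_bounds(2) in \<open>simp add: field_simps\<close>)
qed (rule tendsto_const)

lemma tendsto_ln_ratio_div_ln:
  "((\<lambda>n. ln (real (n choose r) / real (m_tight n)) / ln (real n)) \<longlongrightarrow> real r - 1) sequentially"
proof -
  have "((\<lambda>n. ln (real (m_tight n) / real n)) \<longlongrightarrow> ln c) sequentially"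
    using tendsto_ln[OF tendsto_m_tight_div] c_pos by simp
  then have "((\<lambda>n. ln (real (n choose r)) / ln (real n)
      - (1 + ln (real (m_tight n) / real n) * inverse (ln (real n)))) \<longlongrightarrow> real r - (1 + ln c * 0)) sequentially"
    using r_pos by (intro tendsto_diff tendsto_add tendsto_mult tendsto_ln_binomial_div_ln
        tendsto_inverse_ln_sequentially tendsto_const) auto
  moreover have "\<forall>\<^sub>F n in sequentially. ln (real (n choose r) / real (m_tight n)) / ln (real n)
      = ln (real (n choose r)) / ln (real n) - (1 + ln (real (m_tight n) / real n) * inverse (ln (real n)))"
    using eventually_ge_at_top[of "max r 2"] eventually_c_mult_ge[of 1]
  proof eventually_elim
    case (elim n)
    have "0 < real (m_tight n)" using m_tight_bounds(1)[of n] elim by linarith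
    moreover have "0 < real n" "0 < ln (real n)" "0 < real (n choose r)" using elim by auto
    ultimately show ?case by (simp add: ln_div field_simps)
  qed
  ultimately show ?thesis by (simp add: tendsto_cong)
qed

lemma tendsto_ln_card_H_n_div:
  "((\<lambda>n. ln (real (card (H_n H n))) / ((real r - 1) * real n * ln (real n))) \<longlongrightarrow> c)
    (inf sequentially (principal (range tight_seq)))"
proof -
  define a where "a = real r - 1"
  have a: "a > 0" unfolding a_def using r_gt_1 by simp
  define \<rho> where "\<rho> n = ln (real (n choose r) / real (m_tight n)) / ln (real n)" for n
  define lower where
    "lower n = real (m_tight n) / real n * \<rho> n / a - ln 2 / a * (inverse (real n) * inverse (ln (real n)))" for n
  define upper where
    "upper n = real (m_tight n) / real n * (inverse (ln (real n)) + \<rho> n) / a" for n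
  have \<rho>: "(\<rho> \<longlongrightarrow> a) sequentially"
    unfolding \<rho>_def a_def by (rule tendsto_ln_ratio_div_ln)
  have "(lower \<longlongrightarrow> c * a / a - ln 2 / a * (0 * 0)) sequentially"
    unfolding lower_def using a
    by (intro tendsto_diff tendsto_divide tendsto_mult tendsto_m_tight_div \<rho> lim_inverse_n
        tendsto_inverse_ln_sequentially tendsto_const) auto
  then have lim_lower: "(lower \<longlongrightarrow> c) (inf sequentially (principal (range tight_seq)))"
    using a by (auto intro: tendsto_mono[OF inf_le1])
  have "(upper \<longlongrightarrow> c * (0 + a) / a) sequentially"
    unfolding upper_def using a
    by (intro tendsto_divide tendsto_mult tendsto_add tendsto_m_tight_div \<rho>
        tendsto_inverse_ln_sequentially tendsto_const) auto
  then have lim_upper: "(upper \<longlongrightarrow> c) (inf sequentially (principal (range tight_seq)))"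
    using a by (auto intro: tendsto_mono[OF inf_le1])
  show ?thesis
  proof (rule tendsto_sandwich[OF _ _ lim_lower lim_upper];
      unfold eventually_inf_principal; rule eventually_mono[OF eventually_ge_at_top[of 2]]; intro impI)
    fix n :: nat assume n: "2 \<le> n" "n \<in> range tight_seq"
    note G = ln_between_binomial_bounds[OF card_H_n_tight_seq[OF n(2)]]
    have "0 < real n" "0 < ln (real n)" using n by auto
    then have d: "0 < a * real n * ln (real n)" using a by simp
    have "lower n = (real (m_tight n) * ln (real (n choose r) / real (m_tight n)) - ln 2) / (a * real n * ln (real n))"
      "upper n = real (m_tight n) * (1 + ln (real (n choose r) / real (m_tight n))) / (a * real n * ln (real n))"
      unfolding lower_def upper_def \<rho>_def using a \<open>0 < real n\<close> \<open>0 < ln (real n)\<close> by (simp_all add: field_simps)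
    then show "lower n \<le> ln (real (card (H_n H n))) / ((real r - 1) * real n * ln (real n))"
      "ln (real (card (H_n H n))) / ((real r - 1) * real n * ln (real n)) \<le> upper n"
      using G d unfolding a_def by (simp_all add: divide_right_mono)
  qed
qed

lemma card_H_n_asymptotic:
  defines "F \<equiv> inf sequentially (principal (range tight_seq))"
  shows "\<exists>g. (g \<longlongrightarrow> 0) F \<and>
    (\<forall>\<^sub>F n in F. real (card (H_n H n)) = real n powr ((real r - 1) * (c + g n) * real n))"
proof -
  define g where "g n = ln (real (card (H_n H n))) / ((real r - 1) * real n * ln (real n)) - c" for n
  have "(g \<longlongrightarrow> c - c) F"
    unfolding g_def F_def by (intro tendsto_diff tendsto_ln_card_H_n_div tendsto_const)
  moreover have "\<forall>\<^sub>F n in F. real (card (H_n H n)) = real n powr ((real r - 1) * (c + g n) * real n)"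
    unfolding F_def eventually_inf_principal using eventually_ge_at_top[of 2]
  proof eventually_elim
    case (elim n)
    show ?case
    proof
      assume "n \<in> range tight_seq"
      from ln_between_binomial_bounds(1)[OF card_H_n_tight_seq[OF this]]
      have G: "0 < real (card (H_n H n))" .
      have "(real r - 1) * (c + g n) * real n = ln (real (card (H_n H n))) / ln (real n)"
        unfolding g_def using r_gt_1 elim by (simp add: field_simps)
      then show "real (card (H_n H n)) = real n powr ((real r - 1) * (c + g n) * real n)"
        using elim G by (simp add: powr_def)
    qed
  qed
  ultimately show ?thesis by auto
qed

end

theorem theorem1p5:
  fixes r :: nat and c \<epsilon> :: real
  assumes "r \<ge> 2" and "c \<ge> 1 / (real r - 1)" and "\<epsilon> > 1 / c"
  shows "\<exists>H S. hereditary_property r H \<and> infinite S \<and>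
     (\<exists>g :: nat \<Rightarrow> real. (g \<longlongrightarrow> 0) (inf sequentially (principal S)) \<and>
        (\<forall>\<^sub>F n in inf sequentially (principal S).
           real (card (H_n H n)) = real n powr ((real r - 1) * (c + g n) * real n))) \<and>
     (\<exists>\<^sub>F n in sequentially. real (card (H_n H n)) \<ge> 2 powr (real n powr (real r - \<epsilon>)))"
proof -
  have r: "real r - 1 > 0" using assms(1) by simp
  have "1 / (real r - 1) > 0" using r by simp
  then have c: "c > 0" using assms(2) by linarith
  have rc: "(real r - 1) * c \<ge> 1" using assms(2) r by (simp add: field_simps)
  have "1 / c < real r" using rc c by (simp add: field_simps)
  then have "min \<epsilon> (real r) * c > 1" using assms(3) c by (simp add: field_simps min_def)
  \<comment> \<open>Capping \<open>\<epsilon>\<close> at \<open>r\<close> keeps \<open>n powr (r - \<epsilon>) \<ge> 1\<close>; the last claim for \<open>min \<epsilon> r\<close> implies it for \<open>\<epsilon>\<close>.\<close>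
  then interpret sparse_construction r c "min \<epsilon> (real r)"
    using assms(1) c rc by unfold_locales auto
  show ?thesis
    using hereditary_locally_sparse[of r c sizes] infinite_range_tight_seq card_H_n_asymptotic
      frequently_card_H_n_ge[OF min.cobounded1]
    unfolding H_def by blast
qed

end
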